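(* Let $F$ be a Fano manifold of Fano index $r$. Suppose that $F$ admits a weak Landau--Ginzburg model $f(x)\in\mathbb{C}[x_1^{\pm1},\dots,x_m^{\pm1}]$ all of whose coefficients are non-negative real numbers, and suppose that $\mathrm{Const}(f^{rn})\neq 0$ for all but finitely many $n\in\mathbb{Z}_{\ge0}$. Then the coefficients $G_n$ of the quantum period of $F$ are non-negative real numbers and the limit \[ \lim_{n\to\infty}\sqrt[rn]{(rn)!\,|G_{rn}|}=\lim_{n\to\infty}\sqrt[rn]{\mathrm{Const}(f^{rn})} \] exists.
   Context: For a Fano manifold $F$, the Fano index $r$ is the largest integer $r>0$ such that $c_1(F)/r$ is an integral class. The $J$-function of $F$ is the cohomology-valued (multivalued) function $J_F(t)=e^{c_1(F)\log t}\bigl(1+\sum_{i}\sum_{0\ne d\in H_2(F,\mathbb{Z})}\langle \phi_i/(1-\psi)\rangle_{0,1,d}\,\phi^i\,t^{c_1(F)\cdot d}\bigr)$, where $\{\phi_i\}$ is a basis of $H^{\mathrm{even}}(F)$, $\{\phi^i\}$ the Poincaré dual basis, and $\langle\cdot\rangle_{0,1,d}$ are genus-zero one-point descendant Gromov--Witten invariants ($\psi$ the cotangent line class). The quantum period of $F$ is $G_F(t)=\langle[\mathrm{pt}],J_F(t)\rangle=\sum_{n\ge0}G_nt^n$. For a Laurent polynomial $g$, $\mathrm{Const}(g)$ denotes its constant term. A Laurent polynomial $f$ is a weak Landau--Ginzburg model of $F$ if $G_F(t)=\sum_{n\ge0}\frac{1}{n!}\mathrm{Const}(f^n)t^n$.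 *)

theory Defs
  imports "HOL-Analysis.Analysis" "HOL-Library.Poly_Mapping"
begin

text \<open>The variables are indexed by a finite type 'm (so m = CARD('m)); a monomial
  x^a is identified with its exponent vector a :: int^'m, and a Laurent
  polynomial is a finitely supported map from exponent vectors to coefficients.
  The ring structure of poly_mapping is the usual convolution product, i.e.
  x^a * x^b = x^(a+b).\<close>

type_synonym 'm laurent_poly = "(int ^ 'm) \<Rightarrow>\<^sub>0 complex"

definition Const :: "'m::finite laurent_poly \<Rightarrow> complex" where
  "Const g = Poly_Mapping.lookup g 0"

definition nonneg_coeffs :: "'m::finite laurent_poly \<Rightarrow> bool" where
  "nonneg_coeffs g \<longleftrightarrow> (\<forall>a. \<exists>c::real. c \<ge> 0 \<and> Poly_Mapping.lookup g a = complex_of_real c)"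

text \<open>f is a weak Landau-Ginzburg model for a Fano manifold whose quantum period
  has coefficients G n: G_F(t) = sum_n (1/n!) Const(f^n) t^n, coefficientwise.\<close>

definition weak_LG_model :: "'m::finite laurent_poly \<Rightarrow> (nat \<Rightarrow> complex) \<Rightarrow> bool" where
  "weak_LG_model f G \<longleftrightarrow> (\<forall>n. G n = Const (f ^ n) / of_nat (fact n))"

end

theory Submission
  imports Defs "HOL-Real_Asymp.Real_Asymp"
begin

text \<open>The constant terms c(n) = Const(f^n) of a Laurent polynomial with non-negative coefficients
  are non-negative and supermultiplicative, c(a + b) \<ge> c(a) c(b), because the coefficient of x^0
  in f^a f^b contains the product of the two constant terms and all other contributions are
  non-negative. They are also bounded by K^n with K the sum of the absolute values of the
  coefficients of f. A multiplicative form of Fekete's lemma then shows that the n-th root of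
  c(rn) converges as soon as c(rn) is eventually positive. Finally, the weak Landau-Ginzburg
  condition says exactly that (rn)! G_(rn) = c(rn).\<close>

lemma lookup_mult_keys:
  fixes p q :: "'a::ab_group_add \<Rightarrow>\<^sub>0 'b::semiring_0"
  shows "Poly_Mapping.lookup (p * q) k =
    (\<Sum>l\<in>Poly_Mapping.keys p. Poly_Mapping.lookup p l * Poly_Mapping.lookup q (k - l))"
proof -
  have inner: "Sum_any (\<lambda>j. Poly_Mapping.lookup q j when k = l + j) = Poly_Mapping.lookup q (k - l)"
    for l :: 'a
  proof -
    have "(\<lambda>j. Poly_Mapping.lookup q j when k = l + j) =
          (\<lambda>j. if j = k - l then Poly_Mapping.lookup q j else 0)"
      by (auto simp: when_def fun_eq_iff)
    then show ?thesis by (metis Sum_any.delta)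
  qed
  have "Poly_Mapping.lookup (p * q) k =
        Sum_any (\<lambda>l. Poly_Mapping.lookup p l * Poly_Mapping.lookup q (k - l))"
    by (simp add: lookup_mult inner)
  also have "\<dots> = (\<Sum>l\<in>Poly_Mapping.keys p. Poly_Mapping.lookup p l * Poly_Mapping.lookup q (k - l))"
    by (rule Sum_any.expand_superset) (auto simp: in_keys_iff)
  finally show ?thesis .
qed

definition coeff_l1_norm :: "('a \<Rightarrow>\<^sub>0 'b::real_normed_vector) \<Rightarrow> real" where
  "coeff_l1_norm p = (\<Sum>l\<in>Poly_Mapping.keys p. norm (Poly_Mapping.lookup p l))"

lemma coeff_l1_norm_nonneg: "0 \<le> coeff_l1_norm p"
  unfolding coeff_l1_norm_def by (simp add: sum_nonneg)

lemma norm_lookup_mult_le: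
  fixes p q :: "'a::ab_group_add \<Rightarrow>\<^sub>0 'b::real_normed_algebra"
  assumes "\<And>a. norm (Poly_Mapping.lookup q a) \<le> B"
  shows "norm (Poly_Mapping.lookup (p * q) k) \<le> coeff_l1_norm p * B"
proof -
  have "norm (Poly_Mapping.lookup (p * q) k) \<le>
        (\<Sum>l\<in>Poly_Mapping.keys p. norm (Poly_Mapping.lookup p l * Poly_Mapping.lookup q (k - l)))"
    by (simp add: lookup_mult_keys norm_sum)
  also have "\<dots> \<le> (\<Sum>l\<in>Poly_Mapping.keys p. norm (Poly_Mapping.lookup p l) * B)"
    using assms by (intro sum_mono order.trans[OF norm_mult_ineq] mult_left_mono) auto
  also have "\<dots> = coeff_l1_norm p * B"
    by (simp add: coeff_l1_norm_def sum_distrib_right)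
  finally show ?thesis .
qed

lemma norm_lookup_power_le:
  fixes p :: "'a::ab_group_add \<Rightarrow>\<^sub>0 'b::real_normed_algebra_1"
  shows "norm (Poly_Mapping.lookup (p ^ n) a) \<le> coeff_l1_norm p ^ n"
proof (induction n arbitrary: a)
  case 0
  then show ?case by (simp add: lookup_one when_def)
next
  case (Suc n)
  then show ?case by (simp add: norm_lookup_mult_le)
qed

lemma nonneg_coeffs_iff:
  "nonneg_coeffs g \<longleftrightarrow>
    (\<forall>a. Im (Poly_Mapping.lookup g a) = 0 \<and> 0 \<le> Re (Poly_Mapping.lookup g a))"
  unfolding nonneg_coeffs_def
  by (metis Im_complex_of_real Re_complex_of_real complex_is_Real_iff of_real_Re)

lemma nonneg_coeffs_one: "nonneg_coeffs 1"
  by (simp add: nonneg_coeffs_iff lookup_one when_def)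

lemma nonneg_coeffs_mult:
  assumes "nonneg_coeffs p" "nonneg_coeffs q"
  shows "nonneg_coeffs (p * q)"
  unfolding nonneg_coeffs_iff
proof
  fix a
  have "Im (Poly_Mapping.lookup (p * q) a) =
        (\<Sum>l\<in>Poly_Mapping.keys p. Im (Poly_Mapping.lookup p l * Poly_Mapping.lookup q (a - l)))"
    by (simp add: lookup_mult_keys Im_sum)
  also have "\<dots> = 0"
    using assms by (simp add: nonneg_coeffs_iff)
  finally have "Im (Poly_Mapping.lookup (p * q) a) = 0" .
  moreover have "Re (Poly_Mapping.lookup (p * q) a) =
        (\<Sum>l\<in>Poly_Mapping.keys p. Re (Poly_Mapping.lookup p l * Poly_Mapping.lookup q (a - l)))"
    by (simp add: lookup_mult_keys Re_sum)
  moreover have "\<dots> \<ge> 0"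
    using assms by (intro sum_nonneg) (simp add: nonneg_coeffs_iff)
  ultimately show "Im (Poly_Mapping.lookup (p * q) a) = 0 \<and> 0 \<le> Re (Poly_Mapping.lookup (p * q) a)"
    by simp
qed

lemma nonneg_coeffs_power: "nonneg_coeffs p \<Longrightarrow> nonneg_coeffs (p ^ n)"
  by (induction n) (simp_all add: nonneg_coeffs_one nonneg_coeffs_mult)

lemma Const_eq_Re_if_nonneg_coeffs:
  assumes "nonneg_coeffs p"
  shows "Const p = complex_of_real (Re (Const p))" and "0 \<le> Re (Const p)"
  using assms by (simp_all add: nonneg_coeffs_iff Const_def complex_eq_iff)

lemma Re_Const_mult_ge:
  assumes "nonneg_coeffs p" "nonneg_coeffs q"
  shows "Re (Const p) * Re (Const q) \<le> Re (Const (p * q))"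
proof (cases "0 \<in> Poly_Mapping.keys p")
  case False
  then show ?thesis
    using nonneg_coeffs_mult[OF assms] by (simp add: in_keys_iff nonneg_coeffs_iff Const_def)
next
  case True
  have "Re (Const (p * q)) =
        (\<Sum>l\<in>Poly_Mapping.keys p. Re (Poly_Mapping.lookup p l * Poly_Mapping.lookup q (0 - l)))"
    by (simp add: Const_def lookup_mult_keys Re_sum)
  also have "\<dots> \<ge> Re (Poly_Mapping.lookup p 0 * Poly_Mapping.lookup q (0 - 0))"
    using assms True by (intro member_le_sum) (simp_all add: nonneg_coeffs_iff)
  finally show ?thesis
    using assms by (simp add: nonneg_coeffs_iff Const_def)
qed

subsection \<open>A multiplicative Fekete lemma\<close>

lemma supermult_power_mult_le:
  fixes e :: "nat \<Rightarrow> real"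
  assumes supermult: "\<And>a b. e a * e b \<le> e (a + b)" and nonneg: "\<And>n. 0 \<le> e n"
  shows "e m ^ q * e t \<le> e (q * m + t)"
proof (induction q)
  case 0
  then show ?case by simp
next
  case (Suc q)
  have "e m ^ Suc q * e t = e m * (e m ^ q * e t)" by simp
  also have "\<dots> \<le> e m * e (q * m + t)"
    using Suc nonneg by (intro mult_left_mono) auto
  also have "\<dots> \<le> e (m + (q * m + t))" by (rule supermult)
  finally show ?case by (simp add: add.assoc)
qed

lemma tendsto_shifted_quotient_over_n:
  fixes m N :: nat
  assumes "m > 0"
  shows "(\<lambda>n. real ((n - N) div m) / real n) \<longlonglongrightarrow> inverse (real m)"
proof (rule tendsto_sandwich)
  have bounds: "(real n - N) / m - 1 \<le> real ((n - N) div m) \<and> real ((n - N) div m) \<le> (real n - N) / m"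
    if "n \<ge> N" for n
  proof -
    have "real (n - N) = real ((n - N) div m) * m + real ((n - N) mod m)"
      by (metis of_nat_add of_nat_mult div_mult_mod_eq)
    moreover have "real ((n - N) mod m) < m" using assms by simp
    moreover have "real (n - N) = real n - N" using that by simp
    ultimately show ?thesis using assms by (simp add: field_simps)
  qed
  show "\<forall>\<^sub>F n in sequentially. ((real n - N) / m - 1) / real n \<le> real ((n - N) div m) / real n"
    using eventually_ge_at_top[of N] by eventually_elim (intro divide_right_mono; simp add: bounds)
  show "\<forall>\<^sub>F n in sequentially. real ((n - N) div m) / real n \<le> ((real n - N) / m) / real n"
    using eventually_ge_at_top[of N] by eventually_elim (intro divide_right_mono; simp add: bounds)
  show "(\<lambda>n. ((real n - N) / m - 1) / real n) \<longlonglongrightarrow> inverse (real m)"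
    using assms by real_asymp
  show "(\<lambda>n. ((real n - N) / m) / real n) \<longlonglongrightarrow> inverse (real m)"
    using assms by real_asymp
qed

lemma tendsto_root_power_shifted_quotient:
  fixes m N :: nat and E A :: real
  assumes "m > 0" "E > 0" "A > 0"
  shows "(\<lambda>n. root n (E ^ ((n - N) div m) * A)) \<longlonglongrightarrow> root m E"
proof -
  have "(\<lambda>n. exp (real ((n - N) div m) / real n * ln E + ln A * (1 / real n)))
          \<longlonglongrightarrow> exp (inverse (real m) * ln E + ln A * 0)"
    using assms(1) by (intro tendsto_intros tendsto_shifted_quotient_over_n lim_1_over_n)
  moreover have "\<forall>\<^sub>F n in sequentially.
      exp (real ((n - N) div m) / real n * ln E + ln A * (1 / real n)) = root n (E ^ ((n - N) div m) * A)"
    using eventually_gt_at_top[of 0]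
    by eventually_elim
      (use assms in \<open>simp add: root_powr_inverse powr_def ln_mult ln_realpow add_divide_distrib\<close>)
  moreover have "exp (inverse (real m) * ln E + ln A * 0) = root m E"
    using assms by (simp add: root_powr_inverse powr_def divide_inverse mult.commute)
  ultimately show ?thesis
    using Lim_transform_eventually by fastforce
qed

lemma supermult_eventually_root_gt:
  fixes e :: "nat \<Rightarrow> real"
  assumes supermult: "\<And>a b. e a * e b \<le> e (a + b)" and nonneg: "\<And>n. 0 \<le> e n"
    and pos: "\<And>n. n \<ge> N \<Longrightarrow> 0 < e n"
    and m: "m \<ge> N" "m > 0" and a: "a < root m (e m)"
  shows "\<forall>\<^sub>F n in sequentially. a < root n (e n)"
proof -
  define A where "A = Min (e ` {N..<N + m})"
  have A_pos: "A > 0"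
    unfolding A_def using m pos by (subst Min_gr_iff) auto
  have A_le: "A \<le> e t" if "N \<le> t" "t < N + m" for t
    unfolding A_def using that by (intro Min_le) auto
  have "(\<lambda>n. root n (e m ^ ((n - N) div m) * A)) \<longlonglongrightarrow> root m (e m)"
    using m pos[OF m(1)] A_pos by (intro tendsto_root_power_shifted_quotient)
  then have "\<forall>\<^sub>F n in sequentially. a < root n (e m ^ ((n - N) div m) * A)"
    using a by (rule order_tendstoD(1))
  moreover have "\<forall>\<^sub>F n in sequentially. root n (e m ^ ((n - N) div m) * A) \<le> root n (e n)"
    using eventually_ge_at_top[of "N + m"]
  proof eventually_elim
    case (elim n)
    define t where "t = N + (n - N) mod m"
    have "(n - N) div m * m + (n - N) mod m = n - N"
      by (rule div_mult_mod_eq)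
    then have n_eq: "(n - N) div m * m + t = n"
      using elim unfolding t_def by linarith
    have "e m ^ ((n - N) div m) * A \<le> e m ^ ((n - N) div m) * e t"
      using A_le[of t] m nonneg by (intro mult_left_mono) (auto simp: t_def)
    also have "\<dots> \<le> e ((n - N) div m * m + t)"
      by (rule supermult_power_mult_le[OF supermult nonneg])
    finally have "e m ^ ((n - N) div m) * A \<le> e n"
      unfolding n_eq .
    then show ?case
      using elim m by (intro real_root_le_mono) auto
  qed
  ultimately show ?thesis
    by eventually_elim auto
qed

lemma supermult_root_convergent:
  fixes e :: "nat \<Rightarrow> real"
  assumes supermult: "\<And>a b. e a * e b \<le> e (a + b)" and nonneg: "\<And>n. 0 \<le> e n"
    and bound: "\<And>n. e n \<le> K ^ n"
    and pos: "\<And>n. n \<ge> N \<Longrightarrow> 0 < e n" and "N > 0"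
  shows "convergent (\<lambda>n. root n (e n))"
proof -
  define Y where "Y = (\<lambda>m. root m (e m)) ` {N..}"
  have K_nonneg: "0 \<le> K"
    using bound[of 1] nonneg[of 1] by simp
  have root_le_K: "root m (e m) \<le> K" if "m > 0" for m
  proof -
    have "root m (e m) \<le> root m (K ^ m)"
      using that bound by (intro real_root_le_mono) auto
    also have "\<dots> = K"
      using that K_nonneg by (intro real_root_power_cancel) auto
    finally show ?thesis .
  qed
  have bdd: "bdd_above Y"
    unfolding Y_def bdd_above_def using root_le_K \<open>N > 0\<close> by (intro exI[of _ K]) auto
  have "(\<lambda>n. root n (e n)) \<longlonglongrightarrow> Sup Y"
  proof (rule order_tendstoI)
    fix a assume "Sup Y < a"
    moreover have "root n (e n) \<le> Sup Y" if "n \<ge> N" for n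
      using that bdd by (intro cSup_upper) (auto simp: Y_def)
    ultimately show "\<forall>\<^sub>F n in sequentially. root n (e n) < a"
      unfolding eventually_sequentially by (meson le_less_trans)
  next
    fix a assume "a < Sup Y"
    then obtain m where "m \<ge> N" "a < root m (e m)"
      using less_cSup_iff[OF _ bdd] unfolding Y_def by auto
    then show "\<forall>\<^sub>F n in sequentially. a < root n (e n)"
      using \<open>N > 0\<close> by (intro supermult_eventually_root_gt[OF supermult nonneg pos]) auto
  qed
  then show ?thesis
    by (rule convergentI)
qed

lemma root_Const_power_convergent:
  fixes f :: "'m::finite laurent_poly"
  assumes "r > 0" and nonneg: "nonneg_coeffs f"
    and nonzero: "finite {n. Const (f ^ (r * n)) = 0}"
  shows "convergent (\<lambda>n. root (r * n) (Re (Const (f ^ (r * n)))))"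
proof -
  define e where "e n = Re (Const (f ^ (r * n)))" for n
  have nonneg_power: "nonneg_coeffs (f ^ n)" for n
    using nonneg by (rule nonneg_coeffs_power)
  have supermult: "e a * e b \<le> e (a + b)" for a b
    using Re_Const_mult_ge[OF nonneg_power nonneg_power]
    by (simp add: e_def distrib_left power_add)
  have e_nonneg: "0 \<le> e n" for n
    unfolding e_def by (rule Const_eq_Re_if_nonneg_coeffs(2)[OF nonneg_power])
  have bound: "e n \<le> (coeff_l1_norm f ^ r) ^ n" for n
  proof -
    have "e n \<le> cmod (Const (f ^ (r * n)))"
      unfolding e_def by (rule complex_Re_le_cmod)
    also have "\<dots> \<le> coeff_l1_norm f ^ (r * n)"
      unfolding Const_def by (rule norm_lookup_power_le)
    finally show ?thesis
      by (simp add: power_mult)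
  qed
  obtain M where M: "\<And>n. Const (f ^ (r * n)) = 0 \<Longrightarrow> n \<le> M"
    using nonzero finite_nat_set_iff_bounded_le by auto
  have pos: "0 < e n" if "n \<ge> Suc M" for n
  proof -
    have "Const (f ^ (r * n)) \<noteq> 0"
      using M[of n] that by auto
    then have "e n \<noteq> 0"
      using Const_eq_Re_if_nonneg_coeffs(1)[OF nonneg_power] by (metis e_def of_real_0)
    then show ?thesis
      using e_nonneg[of n] by simp
  qed
  obtain L where "(\<lambda>n. root n (e n)) \<longlonglongrightarrow> L"
    using supermult_root_convergent[OF supermult e_nonneg bound pos] by (auto simp: convergent_def)
  then have "(\<lambda>n. root r (root n (e n))) \<longlonglongrightarrow> root r L"
    by (intro tendsto_intros)
  then show ?thesis
    by (auto simp: convergent_def real_root_mult_exp e_def)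
qed

theorem mainTheorem1:
  fixes f :: "'m::finite laurent_poly"
    and G :: "nat \<Rightarrow> complex"
    and r :: nat
  assumes r_pos: "r > 0"
    and LG: "weak_LG_model f G"
    and nonneg: "nonneg_coeffs f"
    and nonzero: "finite {n::nat. Const (f ^ (r * n)) = 0}"
  shows "(\<forall>n. G n \<in> \<real> \<and> Re (G n) \<ge> 0) \<and>
         (\<exists>L::real.
            (\<lambda>n. root (r * n) (fact (r * n) * cmod (G (r * n)))) \<longlonglongrightarrow> L \<and>
            (\<lambda>n. root (r * n) (Re (Const (f ^ (r * n))))) \<longlonglongrightarrow> L)"
proof -
  define c where "c n = Re (Const (f ^ n))" for n
  have c_nonneg: "0 \<le> c n" and G_eq: "G n = complex_of_real (c n / fact n)" for n
    using Const_eq_Re_if_nonneg_coeffs[OF nonneg_coeffs_power[OF nonneg, of n]] LG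
    by (simp_all add: c_def weak_LG_model_def)
  have "G n \<in> \<real> \<and> Re (G n) \<ge> 0" for n
    unfolding G_eq Re_complex_of_real by (intro conjI Reals_of_real) (simp add: c_nonneg)
  moreover have "fact n * cmod (G n) = c n" for n
    unfolding G_eq norm_of_real using c_nonneg[of n] by simp
  moreover obtain L where "(\<lambda>n. root (r * n) (c (r * n))) \<longlonglongrightarrow> L"
    using root_Const_power_convergent[OF r_pos nonneg nonzero] by (auto simp: convergent_def c_def)
  ultimately show ?thesis
    by (auto simp: c_def)
qed

end
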